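(* Let $T^{2,2}$ be the policy with $T^{2,2}_i=\mathcal{R}_{2,2}(T_i^* )$ for every $i\in[n]$. Then $T^{2,2}$ is resource-feasible and $F(T^{2,2})\le\sqrt2\cdot\mathrm{OPT}(P)$.
   Context: An instance consists of integers $n\ge 1$, $D\ge 1$; a joint ordering cost $K_0>0$; for each commodity $i\in[n]$ an ordering cost $K_i>0$ and a holding coefficient $H_i>0$; and resource coefficients $\alpha_{id}\ge 0$. A policy is $T=(T_1,\dots,T_n)\in\mathbb{R}_{>0}^n$; it is resource-feasible if $\sum_{i}\alpha_{id}/T_i\le 1$ for every $d\in[D]$. For $g>0$, $\Delta\ge 0$, $\mathcal{M}_{g,\Delta}=\{0,g,\dots,\lfloor\Delta/g\rfloor g\}$; $N(T,\Delta)=|\bigcup_{i}\mathcal{M}_{T_i,\Delta}|$; $J(T)=K_0\limsup_{\Delta\to\infty}N(T,\Delta)/\Delta$; $F(T)=J(T)+\sum_i(K_i/T_i+H_iT_i)$. The convex relaxation (P) is: minimize $K_0/T_{\min}+\sum_{i\in[n]}(K_i/T_i+H_iT_i)$ over $(T_{\min},T_1,\dots,T_n)$ subject to $T_i\ge T_{\min}\ge0$ for all $i$ and $\sum_i\alpha_{id}/T_i\le1$ for all $d$. $\mathrm{OPT}(P)$ is its optimal value and $T^*=(T^*_{\min},T^*_1,\dots,T^*_n)$ is a fixed optimal solution (with $T^*_{\min}>0$). For integers $m\ge2$, $k\ge1$: $\mathcal{G}_{m,k}=\{m^{p/k}T^*_{\min}:p\in\mathbb{Z}\}$ and $\mathcal{R}_{m,k}(t)=\min\{g\in\mathcal{G}_{m,k}:g>t\}$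 for $t>0$. *)

theory Defs
  imports "HOL-Analysis.Analysis" "HOL-Library.Extended_Real" "HOL-Library.Liminf_Limsup"
begin

text \<open>Commodities are indexed by i < n, resources by d < D; policies are
  functions nat \<Rightarrow> real whose values outside [n] are irrelevant.
  Resource coefficients: alpha i d.\<close>

definition resource_feasible ::
  "nat \<Rightarrow> nat \<Rightarrow> (nat \<Rightarrow> nat \<Rightarrow> real) \<Rightarrow> (nat \<Rightarrow> real) \<Rightarrow> bool" where
  "resource_feasible n D alpha T \<longleftrightarrow>
     (\<forall>i<n. T i > 0) \<and> (\<forall>d<D. (\<Sum>i<n. alpha i d / T i) \<le> 1)"

definition mults :: "real \<Rightarrow> real \<Rightarrow> real set" where
  "mults g \<Delta> = {real k * g | k::nat. k \<le> nat \<lfloor>\<Delta> / g\<rfloor>}"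

definition Ncount :: "nat \<Rightarrow> (nat \<Rightarrow> real) \<Rightarrow> real \<Rightarrow> nat" where
  "Ncount n T \<Delta> = card (\<Union>i<n. mults (T i) \<Delta>)"

definition Jlim :: "nat \<Rightarrow> (nat \<Rightarrow> real) \<Rightarrow> ereal" where
  "Jlim n T = Limsup at_top (\<lambda>\<Delta>::real. ereal (real (Ncount n T \<Delta>) / \<Delta>))"

definition Jc :: "nat \<Rightarrow> real \<Rightarrow> (nat \<Rightarrow> real) \<Rightarrow> ereal" where
  "Jc n K0 T = ereal K0 * Jlim n T"

definition Fcost :: "nat \<Rightarrow> real \<Rightarrow> (nat \<Rightarrow> real) \<Rightarrow> (nat \<Rightarrow> real) \<Rightarrow> (nat \<Rightarrow> real) \<Rightarrow> ereal" where
  "Fcost n K0 K H T = Jc n K0 T + ereal (\<Sum>i<n. K i / T i + H i * T i)"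

text \<open>Convex relaxation (P). A point is a pair (Tmin, T). Points with Tmin = 0
  have objective +infinity in the paper and are excluded (they cannot affect the
  infimum or optimality).\<close>

definition P_feasible :: "nat \<Rightarrow> nat \<Rightarrow> (nat \<Rightarrow> nat \<Rightarrow> real) \<Rightarrow> real \<times> (nat \<Rightarrow> real) \<Rightarrow> bool" where
  "P_feasible n D alpha x \<longleftrightarrow>
     fst x > 0 \<and> (\<forall>i<n. snd x i \<ge> fst x) \<and> (\<forall>d<D. (\<Sum>i<n. alpha i d / snd x i) \<le> 1)"

definition P_obj :: "nat \<Rightarrow> real \<Rightarrow> (nat \<Rightarrow> real) \<Rightarrow> (nat \<Rightarrow> real) \<Rightarrow> real \<times> (nat \<Rightarrow> real) \<Rightarrow> real" where
  "P_obj n K0 K H x = K0 / fst x + (\<Sum>i<n. K i / snd x i + H i * snd x i)"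

definition OPT_P :: "nat \<Rightarrow> nat \<Rightarrow> (nat \<Rightarrow> nat \<Rightarrow> real) \<Rightarrow> real \<Rightarrow> (nat \<Rightarrow> real) \<Rightarrow> (nat \<Rightarrow> real) \<Rightarrow> real" where
  "OPT_P n D alpha K0 K H = (INF x\<in>{x. P_feasible n D alpha x}. P_obj n K0 K H x)"

definition grid :: "nat \<Rightarrow> nat \<Rightarrow> real \<Rightarrow> real set" where
  "grid m k Tmin = {(real m) powr (real_of_int p / real k) * Tmin | p::int. True}"

definition round_up :: "nat \<Rightarrow> nat \<Rightarrow> real \<Rightarrow> real \<Rightarrow> real" where
  "round_up m k Tmin t = (LEAST g. g \<in> grid m k Tmin \<and> g > t)"

end

theory Submission
  imports Defs
begin

(* Rounding T*_i up to the grid 2^(p/2) T*_min multiplies it by a factor in (1, sqrt 2], so the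
   resource constraints stay satisfied and every term K_i/T_i + H_i T_i grows by at most sqrt 2.
   Since T*_i >= T*_min, the exponent p of every rounded period is positive, so the period is an
   integer multiple of 2 T*_min (p even) or of sqrt 2 T*_min (p odd). Hence every joint order time
   is a multiple of one of these two periods, and J <= K0 (1/2 + 1/sqrt 2) / T*_min
   <= sqrt 2 K0 / T*_min, which is sqrt 2 times the joint term of (P) at its optimum. *)

lemma round_up_grid_point:
  fixes m k :: nat and Tm t :: real
  assumes m: "m \<ge> 2" and k: "k \<ge> 1" and Tm: "Tm > 0" and t: "t > 0"
  obtains p :: int where "round_up m k Tm t = m powr (p / k) * Tm"
    and "m powr ((p - 1) / k) * Tm \<le> t" and "t < m powr (p / k) * Tm"
proof -
  define x where "x = k * log m (t / Tm)"
  define p where "p = \<lfloor>x\<rfloor> + 1"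
  have above_iff: "t < m powr (y / k) * Tm \<longleftrightarrow> x < y" for y :: real
  proof -
    have "t < m powr (y / k) * Tm \<longleftrightarrow> t / Tm < m powr (y / k)"
      using Tm by (simp add: divide_less_eq)
    also have "\<dots> \<longleftrightarrow> log m (t / Tm) < y / k"
      using log_less_iff[of m "t / Tm" "y / k"] m Tm t by simp
    also have "\<dots> \<longleftrightarrow> x < y"
      using k by (simp add: x_def less_divide_eq mult.commute)
    finally show ?thesis .
  qed
  have least: "round_up m k Tm t = m powr (p / k) * Tm"
    unfolding round_up_def
  proof (rule Least_equality)
    have "x < p" unfolding p_def by linarith
    then show "m powr (p / k) * Tm \<in> grid m k Tm \<and> t < m powr (p / k) * Tm"
      using above_iff[of p] unfolding grid_def by blast
  next
    fix g assume "g \<in> grid m k Tm \<and> t < g"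
    then obtain q :: int where g: "g = m powr (q / k) * Tm" and "x < q"
      using above_iff unfolding grid_def by auto
    then have "p \<le> q" unfolding p_def by linarith
    then show "m powr (p / k) * Tm \<le> g"
      using g m k Tm by (simp add: divide_right_mono)
  qed
  have "real_of_int p - 1 \<le> x" and "x < p"
    unfolding p_def by linarith+
  then have "\<not> t < m powr ((p - 1) / k) * Tm" and "t < m powr (p / k) * Tm"
    using above_iff[of "p - 1"] above_iff[of p] by simp_all
  then show thesis
    using that[OF least] by simp
qed

lemma round_up_bounds:
  fixes m k :: nat and Tm t :: real
  assumes "m \<ge> 2" and "k \<ge> 1" and "Tm > 0" and "t > 0"
  shows "t < round_up m k Tm t" and "round_up m k Tm t \<le> m powr (1 / k) * t"
proof -
  obtain p :: int where eq: "round_up m k Tm t = m powr (p / k) * Tm"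
    and below: "m powr ((p - 1) / k) * Tm \<le> t" and above: "t < m powr (p / k) * Tm"
    using round_up_grid_point assms by blast
  show "t < round_up m k Tm t" using eq above by simp
  have "m powr (p / k) = m powr (1 / k) * m powr ((p - 1) / k)"
    by (simp add: powr_add[symmetric] diff_divide_distrib)
  then have "round_up m k Tm t = m powr (1 / k) * (m powr ((p - 1) / k) * Tm)"
    using eq by simp
  also have "\<dots> \<le> m powr (1 / k) * t"
    using below by (simp add: mult_left_mono)
  finally show "round_up m k Tm t \<le> m powr (1 / k) * t" .
qed

lemma round_up_positive_exponent:
  fixes m k :: nat and Tm t :: real
  assumes "m \<ge> 2" and "k \<ge> 1" and Tm: "Tm > 0" and "Tm \<le> t"
  obtains p :: int where "p \<ge> 1" and "round_up m k Tm t = m powr (p / k) * Tm"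
proof -
  obtain p :: int where eq: "round_up m k Tm t = m powr (p / k) * Tm"
    and above: "t < m powr (p / k) * Tm"
    using round_up_grid_point assms by (metis order_less_le_trans)
  have "1 * Tm < m powr (p / k) * Tm" using above \<open>Tm \<le> t\<close> by simp
  then have "1 < m powr (p / k)" using Tm by simp
  then have "0 < p / k" using less_powr_iff[of m 1 "p / k"] assms by simp
  then have "p \<ge> 1" by (simp add: zero_less_divide_iff)
  then show thesis using that eq by blast
qed

lemma mults_scale_subset:
  fixes g :: real and j :: nat
  assumes g: "g > 0"
  shows "mults (real j * g) \<Delta> \<subseteq> mults g \<Delta>"
proof
  fix x assume "x \<in> mults (real j * g) \<Delta>"
  then obtain k :: nat where "x = real k * (real j * g)" and k: "k \<le> nat \<lfloor>\<Delta> / (real j * g)\<rfloor>"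
    unfolding mults_def by blast
  then have x: "x = real (k * j) * g" by simp
  have "k * j \<le> nat \<lfloor>\<Delta> / g\<rfloor>"
  proof (cases "k * j = 0")
    case False
    then have "int k \<le> \<lfloor>\<Delta> / (real j * g)\<rfloor>"
      using k by (cases "\<lfloor>\<Delta> / (real j * g)\<rfloor> \<ge> 0") (simp_all add: le_nat_iff)
    then have "real k \<le> \<Delta> / (real j * g)" by (simp add: le_floor_iff)
    then have "real (k * j) \<le> \<Delta> / g" using g False by (simp add: field_simps)
    then show ?thesis by linarith
  qed auto
  then show "x \<in> mults g \<Delta>" unfolding mults_def x by blast
qed

lemma mults_eq_image: "mults g \<Delta> = (\<lambda>k. real k * g) ` {..nat \<lfloor>\<Delta> / g\<rfloor>}"
  unfolding mults_def by auto

lemma finite_mults: "finite (mults g \<Delta>)"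
  unfolding mults_eq_image by simp

lemma card_mults_le:
  fixes g \<Delta> :: real
  assumes "g > 0" and "\<Delta> \<ge> 0"
  shows "real (card (mults g \<Delta>)) \<le> \<Delta> / g + 1"
proof -
  have "card (mults g \<Delta>) \<le> nat \<lfloor>\<Delta> / g\<rfloor> + 1"
    unfolding mults_eq_image using card_image_le[of "{..nat \<lfloor>\<Delta> / g\<rfloor>}"] by simp
  moreover have "real (nat \<lfloor>\<Delta> / g\<rfloor>) \<le> \<Delta> / g" using assms by simp
  ultimately show ?thesis by linarith
qed

lemma two_powr_half_int_cases:
  fixes p :: int
  assumes "p \<ge> 1"
  obtains j :: nat where "2 powr (p / 2) = real j * 2"
    | j :: nat where "2 powr (p / 2) = real j * sqrt 2"
proof (cases "even p")
  case True
  define q where "q = nat (p div 2 - 1)"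
  have "p = 2 * (int q + 1)"
    using True assms unfolding q_def by auto
  then have exponent: "real_of_int p / 2 = real q + 1" by simp
  have "2 powr (p / 2) = 2 powr (real q + 1)" by (simp only: exponent)
  also have "\<dots> = real (2 ^ q) * 2"
    by (simp add: powr_add powr_realpow)
  finally show thesis using that(1) by blast
next
  case False
  define q where "q = nat (p div 2)"
  have q: "p = 2 * int q + 1"
    using False assms unfolding q_def by auto
  have "2 powr (p / 2) = 2 powr (real q) * 2 powr (1 / 2)"
    using q by (simp add: powr_add[symmetric] add_divide_distrib)
  also have "\<dots> = real (2 ^ q) * sqrt 2"
    by (simp add: powr_realpow powr_half_sqrt)
  finally show thesis using that(2) by blast
qed

lemma mults_round_up_2_2_subset:
  fixes Tm t :: real
  assumes Tm: "Tm > 0" and "Tm \<le> t"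
  shows "mults (round_up 2 2 Tm t) \<Delta> \<subseteq> mults (2 * Tm) \<Delta> \<union> mults (sqrt 2 * Tm) \<Delta>"
proof -
  obtain p :: int where "p \<ge> 1" and eq: "round_up 2 2 Tm t = 2 powr (p / 2) * Tm"
    using round_up_positive_exponent[of 2 2 Tm t] assms by auto
  then consider j :: nat where "round_up 2 2 Tm t = real j * (2 * Tm)"
    | j :: nat where "round_up 2 2 Tm t = real j * (sqrt 2 * Tm)"
    by (cases rule: two_powr_half_int_cases) auto
  then show ?thesis
    by cases (use mults_scale_subset Tm in \<open>simp_all add: le_supI1 le_supI2\<close>)
qed

lemma Ncount_le_of_mults_cover:
  fixes a b \<Delta> :: real
  assumes "a > 0" and "b > 0" and "\<Delta> \<ge> 0"
    and cover: "\<And>i. i < n \<Longrightarrow> mults (T i) \<Delta> \<subseteq> mults a \<Delta> \<union> mults b \<Delta>"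
  shows "real (Ncount n T \<Delta>) \<le> \<Delta> / a + \<Delta> / b + 2"
proof -
  have "Ncount n T \<Delta> \<le> card (mults a \<Delta> \<union> mults b \<Delta>)"
    unfolding Ncount_def using cover by (intro card_mono) (auto simp: finite_mults)
  also have "\<dots> \<le> card (mults a \<Delta>) + card (mults b \<Delta>)"
    by (rule card_Un_le)
  finally show ?thesis
    using card_mults_le[of a \<Delta>] card_mults_le[of b \<Delta>] assms by linarith
qed

lemma Jlim_le_of_mults_cover:
  fixes a b :: real
  assumes "a > 0" and "b > 0"
    and cover: "\<And>i \<Delta>. i < n \<Longrightarrow> mults (T i) \<Delta> \<subseteq> mults a \<Delta> \<union> mults b \<Delta>"
  shows "Jlim n T \<le> ereal (1 / a + 1 / b)"
proof -
  have "\<forall>\<^sub>F \<Delta> in at_top. ereal (real (Ncount n T \<Delta>) / \<Delta>) \<le> ereal (1 / a + 1 / b + 2 / \<Delta>)"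
  proof (rule eventually_mono[OF eventually_gt_at_top[of 0]])
    fix \<Delta> :: real assume "\<Delta> > 0"
    then have "real (Ncount n T \<Delta>) / \<Delta> \<le> (\<Delta> / a + \<Delta> / b + 2) / \<Delta>"
      using Ncount_le_of_mults_cover[of a b \<Delta>] assms by (simp add: divide_right_mono)
    also have "\<dots> = 1 / a + 1 / b + 2 / \<Delta>"
      using \<open>\<Delta> > 0\<close> by (simp add: field_simps)
    finally show "ereal (real (Ncount n T \<Delta>) / \<Delta>) \<le> ereal (1 / a + 1 / b + 2 / \<Delta>)"
      by simp
  qed
  then have "Jlim n T \<le> Limsup at_top (\<lambda>\<Delta>::real. ereal (1 / a + 1 / b + 2 / \<Delta>))"
    unfolding Jlim_def by (rule Limsup_mono)
  also have "\<dots> = ereal (1 / a + 1 / b)"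
  proof (intro lim_imp_Limsup tendsto_ereal)
    show "((\<lambda>\<Delta>::real. 1 / a + 1 / b + 2 / \<Delta>) \<longlongrightarrow> 1 / a + 1 / b) at_top"
      using tendsto_add[OF tendsto_const tendsto_divide_0[OF tendsto_const
          filterlim_at_top_imp_at_infinity[OF filterlim_ident]]]
      by simp
  qed simp
  finally show ?thesis .
qed

lemma inverse_two_plus_inverse_sqrt2_le:
  fixes x :: real
  assumes "x > 0"
  shows "1 / (2 * x) + 1 / (sqrt 2 * x) \<le> sqrt 2 / x"
proof -
  have "1 / sqrt 2 = sqrt 2 / (2::real)"
    by (simp add: field_simps)
  moreover have "1 \<le> sqrt (2::real)"
    by simp
  ultimately have "1 / 2 + 1 / sqrt 2 \<le> sqrt (2::real)"
    by linarith
  then have "(1 / 2 + 1 / sqrt 2) / x \<le> sqrt 2 / x"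
    using assms by (simp add: divide_right_mono)
  then show ?thesis
    by (simp add: add_divide_distrib)
qed

lemma Jlim_round_up_2_2_le:
  fixes Tm :: real and t :: "nat \<Rightarrow> real"
  assumes Tm: "Tm > 0" and t: "\<And>i. i < n \<Longrightarrow> Tm \<le> t i"
  shows "Jlim n (\<lambda>i. round_up 2 2 Tm (t i)) \<le> ereal (sqrt 2 / Tm)"
proof -
  have "Jlim n (\<lambda>i. round_up 2 2 Tm (t i)) \<le> ereal (1 / (2 * Tm) + 1 / (sqrt 2 * Tm))"
  proof (rule Jlim_le_of_mults_cover)
    show "mults (round_up 2 2 Tm (t i)) \<Delta> \<subseteq> mults (2 * Tm) \<Delta> \<union> mults (sqrt 2 * Tm) \<Delta>"
      if "i < n" for i \<Delta>
      using Tm t[OF that] by (rule mults_round_up_2_2_subset)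
  qed (use Tm in simp_all)
  also have "\<dots> \<le> ereal (sqrt 2 / Tm)"
    using inverse_two_plus_inverse_sqrt2_le[OF Tm] by simp
  finally show ?thesis .
qed

lemma Fcost_le_of_Jlim_le:
  assumes "K0 \<ge> 0" and "Jlim n T \<le> ereal j"
  shows "Fcost n K0 K H T \<le> ereal (K0 * j + (\<Sum>i<n. K i / T i + H i * T i))"
proof -
  have "Jc n K0 T \<le> ereal (K0 * j)"
    unfolding Jc_def using ereal_mult_left_mono[OF assms(2), of "ereal K0"] assms(1) by simp
  then have "Jc n K0 T + ereal (\<Sum>i<n. K i / T i + H i * T i)
      \<le> ereal (K0 * j) + ereal (\<Sum>i<n. K i / T i + H i * T i)"
    by (rule add_right_mono)
  then show ?thesis
    unfolding Fcost_def by simp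
qed

lemma resource_feasible_mono:
  assumes S: "resource_feasible n D alpha S" and alpha: "\<forall>i<n. \<forall>d<D. alpha i d \<ge> 0"
    and le: "\<And>i. i < n \<Longrightarrow> S i \<le> T i"
  shows "resource_feasible n D alpha T"
proof -
  have S_pos: "S i > 0" if "i < n" for i
    using S that unfolding resource_feasible_def by blast
  have T_pos: "T i > 0" if "i < n" for i
    using S_pos[OF that] le[OF that] by linarith
  have "(\<Sum>i<n. alpha i d / T i) \<le> 1" if d: "d < D" for d
  proof -
    have "(\<Sum>i<n. alpha i d / T i) \<le> (\<Sum>i<n. alpha i d / S i)"
    proof (rule sum_mono)
      fix i assume "i \<in> {..<n}"
      then show "alpha i d / T i \<le> alpha i d / S i"
        using alpha d le S_pos T_pos by (simp add: divide_left_mono)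
    qed
    also have "\<dots> \<le> 1"
      using S d unfolding resource_feasible_def by blast
    finally show ?thesis .
  qed
  then show ?thesis
    unfolding resource_feasible_def using T_pos by blast
qed

lemma P_feasible_imp_resource_feasible:
  assumes "P_feasible n D alpha x"
  shows "resource_feasible n D alpha (snd x)"
  using assms unfolding P_feasible_def resource_feasible_def
  by (meson order_less_le_trans)

lemma OPT_P_eq_minimum:
  assumes "P_feasible n D alpha x"
    and "\<forall>y. P_feasible n D alpha y \<longrightarrow> P_obj n K0 K H x \<le> P_obj n K0 K H y"
  shows "OPT_P n D alpha K0 K H = P_obj n K0 K H x"
  unfolding OPT_P_def using assms by (intro cInf_eq_minimum) auto

lemma stretched_cost_le:
  fixes c K H t T :: real
  assumes "c \<ge> 1" and "K \<ge> 0" and "H \<ge> 0" and "t > 0" and "t \<le> T" and "T \<le> c * t"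
  shows "K / T + H * T \<le> c * (K / t + H * t)"
proof -
  have "K / T \<le> K / t"
    using assms by (intro divide_left_mono) auto
  also have "\<dots> \<le> c * (K / t)"
    using mult_right_mono[of 1 c "K / t"] assms by simp
  finally have "K / T \<le> c * (K / t)" .
  moreover have "H * T \<le> c * (H * t)"
    using assms by (metis mult.left_commute mult_left_mono)
  ultimately show ?thesis
    by (simp add: distrib_left)
qed

lemma sum_stretched_cost_le:
  fixes c :: real and K H S T :: "nat \<Rightarrow> real"
  assumes "c \<ge> 1" and "\<And>i. i < n \<Longrightarrow> K i \<ge> 0" and "\<And>i. i < n \<Longrightarrow> H i \<ge> 0"
    and "\<And>i. i < n \<Longrightarrow> S i > 0" and "\<And>i. i < n \<Longrightarrow> S i \<le> T i"
    and "\<And>i. i < n \<Longrightarrow> T i \<le> c * S i"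
  shows "(\<Sum>i<n. K i / T i + H i * T i) \<le> c * (\<Sum>i<n. K i / S i + H i * S i)"
  unfolding sum_distrib_left
proof (rule sum_mono)
  fix i assume "i \<in> {..<n}"
  then show "K i / T i + H i * T i \<le> c * (K i / S i + H i * S i)"
    using assms by (intro stretched_cost_le) auto
qed

theorem lemma2p3:
  fixes n D :: nat and K0 :: real and K H :: "nat \<Rightarrow> real"
    and alpha :: "nat \<Rightarrow> nat \<Rightarrow> real" and Tstar :: "real \<times> (nat \<Rightarrow> real)"
  assumes "n \<ge> 1" and "D \<ge> 1" and "K0 > 0"
    and "\<forall>i<n. K i > 0" and "\<forall>i<n. H i > 0"
    and "\<forall>i<n. \<forall>d<D. alpha i d \<ge> 0"
    and "P_feasible n D alpha Tstar"
    and "\<forall>x. P_feasible n D alpha x \<longrightarrow> P_obj n K0 K H Tstar \<le> P_obj n K0 K H x"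
  defines "T22 \<equiv> (\<lambda>i. round_up 2 2 (fst Tstar) (snd Tstar i))"
  shows "resource_feasible n D alpha T22
    \<and> Fcost n K0 K H T22 \<le> ereal (sqrt 2 * OPT_P n D alpha K0 K H)"
proof -
  define Tm where "Tm = fst Tstar"
  define Ts where "Ts = snd Tstar"
  have Tm: "Tm > 0" and Ts_ge: "\<And>i. i < n \<Longrightarrow> Tm \<le> Ts i"
    using assms(7) unfolding P_feasible_def Tm_def Ts_def by auto
  have T22_eq: "T22 = (\<lambda>i. round_up 2 2 Tm (Ts i))"
    unfolding T22_def Tm_def Ts_def ..
  have T22_bounds: "Ts i < T22 i" "T22 i \<le> sqrt 2 * Ts i" if "i < n" for i
    using round_up_bounds[of 2 2 Tm "Ts i"] Tm Ts_ge[OF that]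
    unfolding T22_eq by (simp_all add: powr_half_sqrt)
  have feasible: "resource_feasible n D alpha T22"
  proof (rule resource_feasible_mono[OF _ assms(6)])
    show "resource_feasible n D alpha Ts"
      using P_feasible_imp_resource_feasible[OF assms(7)] unfolding Ts_def .
    show "Ts i \<le> T22 i" if "i < n" for i
      using T22_bounds(1)[OF that] by (rule less_imp_le)
  qed
  have "Jlim n T22 \<le> ereal (sqrt 2 / Tm)"
    unfolding T22_eq using Tm Ts_ge by (rule Jlim_round_up_2_2_le)
  then have "Fcost n K0 K H T22 \<le> ereal (K0 * (sqrt 2 / Tm) + (\<Sum>i<n. K i / T22 i + H i * T22 i))"
    using assms(3) by (intro Fcost_le_of_Jlim_le) auto
  also have "\<dots> \<le> ereal (sqrt 2 * P_obj n K0 K H Tstar)"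
  proof -
    have "(\<Sum>i<n. K i / T22 i + H i * T22 i) \<le> sqrt 2 * (\<Sum>i<n. K i / Ts i + H i * Ts i)"
      using assms(4,5) T22_bounds Tm Ts_ge
      by (intro sum_stretched_cost_le) (auto intro: less_imp_le order_less_le_trans)
    then show ?thesis
      unfolding P_obj_def Tm_def Ts_def by (simp add: distrib_left mult.commute)
  qed
  also have "\<dots> = ereal (sqrt 2 * OPT_P n D alpha K0 K H)"
    unfolding OPT_P_eq_minimum[OF assms(7,8)] ..
  finally show ?thesis
    using feasible by simp
qed

end
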